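(* Let $G$ be a group, $E$ a real Banach space, and $f\colon G\to E$ such that $\|f(xy)+f(xy^{-1})-2f(x)\|\le c$ for all $x,y\in G$, for some $c>0$. For $m\in\mathbb{N}$, $m\ge 2$, let $\varphi_m(x)=\lim_{k\to\infty}\frac{1}{m^k}f(x^{m^k})$. Then $\varphi_m\in KJ(G;E)$.
   Context: For such $f$ and $m\ge 2$ the limit defining $\varphi_m(x)$ exists in $E$ for every $x\in G$. $KJ(G;E)$ is the space of functions $g\colon G\to E$ for which there exists a constant $d>0$ with $\|g(xy)+g(xy^{-1})-2g(x)\|\le d$ for all $x,y\in G$. *)

theory Defs
  imports "HOL-Analysis.Analysis" "HOL-Algebra.Group"
begin

definition phi_lim :: "('a, 'c) monoid_scheme \<Rightarrow> ('a \<Rightarrow> 'b::real_normed_vector) \<Rightarrow> nat \<Rightarrow> 'a \<Rightarrow> 'b" where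
  "phi_lim G f m x = lim (\<lambda>k. (1 / real (m ^ k)) *\<^sub>R f (x [^]\<^bsub>G\<^esub> (m ^ k)))"

definition KJ :: "('a, 'c) monoid_scheme \<Rightarrow> ('a \<Rightarrow> 'b::real_normed_vector) set" where
  "KJ G = {g. \<exists>d>0. \<forall>x\<in>carrier G. \<forall>y\<in>carrier G.
      norm (g (x \<otimes>\<^bsub>G\<^esub> y) + g (x \<otimes>\<^bsub>G\<^esub> inv\<^bsub>G\<^esub> y) - 2 *\<^sub>R g x) \<le> d}"

end

theory Submission
  imports Defs
begin

text \<open>Along the powers a^0, a^n, a^2n, ... of a fixed element the Jensen defect of f is a
  second difference, so f(a^mn) differs from m f(a^n) by a constant independent of a and n.
  Hence the increments of k \<mapsto> m^-k f(a^(m^k)) decay like m^-k, and \<phi>_m stays within a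
  uniform distance of f. A bounded perturbation of a function with bounded Jensen defect
  again has bounded Jensen defect.\<close>

definition jensen_defect ::
    "('a, 'c) monoid_scheme \<Rightarrow> ('a \<Rightarrow> 'b::real_normed_vector) \<Rightarrow> 'a \<Rightarrow> 'a \<Rightarrow> 'b" where
  "jensen_defect G f x y = f (x \<otimes>\<^bsub>G\<^esub> y) + f (x \<otimes>\<^bsub>G\<^esub> inv\<^bsub>G\<^esub> y) - 2 *\<^sub>R f x"

lemma KJ_iff_bounded_jensen_defect:
  "g \<in> KJ G \<longleftrightarrow> (\<exists>d>0. \<forall>x\<in>carrier G. \<forall>y\<in>carrier G. norm (jensen_defect G g x y) \<le> d)"
  unfolding KJ_def jensen_defect_def by simp

lemma second_difference_bound:
  fixes h :: "nat \<Rightarrow> 'b::real_normed_vector"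
  assumes second_diff: "\<And>j. norm (h (Suc (Suc j)) + h j - 2 *\<^sub>R h (Suc j)) \<le> c"
  shows "norm (h j - h 0 - real j *\<^sub>R (h 1 - h 0)) \<le> c * real j ^ 2"
proof -
  have "c \<ge> 0" using norm_ge_zero order_trans second_diff by blast
  have first_diff: "norm ((h (Suc j) - h j) - (h 1 - h 0)) \<le> c * real j" for j
  proof (induction j)
    case 0
    then show ?case by simp
  next
    case (Suc j)
    have "(h (Suc (Suc j)) - h (Suc j)) - (h 1 - h 0)
        = ((h (Suc j) - h j) - (h 1 - h 0)) + (h (Suc (Suc j)) + h j - 2 *\<^sub>R h (Suc j))"
      by (simp add: algebra_simps scaleR_2)
    also have "norm \<dots> \<le> c * real j + c"
      using norm_triangle_ineq Suc.IH second_diff by (rule order_trans[OF _ add_mono])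
    finally show ?case by (simp add: algebra_simps)
  qed
  show ?thesis
  proof (induction j)
    case 0
    then show ?case by simp
  next
    case (Suc j)
    have "h (Suc j) - h 0 - real (Suc j) *\<^sub>R (h 1 - h 0)
        = (h j - h 0 - real j *\<^sub>R (h 1 - h 0)) + ((h (Suc j) - h j) - (h 1 - h 0))"
      by (simp add: algebra_simps)
    also have "norm \<dots> \<le> c * real j ^ 2 + c * real j"
      using norm_triangle_ineq Suc.IH first_diff by (rule order_trans[OF _ add_mono])
    also have "\<dots> \<le> c * real (Suc j) ^ 2"
      using \<open>c \<ge> 0\<close> by (simp add: power2_eq_square algebra_simps)
    finally show ?case .
  qed
qed

lemma norm_lim_sub_le_geometric:
  fixes u :: "nat \<Rightarrow> 'b::banach"
  assumes increments: "\<And>k. norm (u (Suc k) - u k) \<le> K * r ^ k" and "0 \<le> r" "r < 1"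
  shows "norm (lim u - u 0) \<le> K / (1 - r)"
proof -
  have geometric: "(\<lambda>k. K * r ^ k) sums (K / (1 - r))"
    using sums_mult[OF geometric_sums, of r K] assms(2,3) by simp
  have summable_norms: "summable (\<lambda>k. norm (u (Suc k) - u k))"
    using increments by (intro summable_comparison_test[OF _ sums_summable[OF geometric]]) auto
  define s where "s = (\<Sum>k. u (Suc k) - u k)"
  have "(\<lambda>n. \<Sum>k<n. u (Suc k) - u k) \<longlonglongrightarrow> s"
    unfolding s_def using summable_LIMSEQ summable_norm_cancel[OF summable_norms] by blast
  then have "(\<lambda>n. u 0 + (u n - u 0)) \<longlonglongrightarrow> u 0 + s"
    unfolding sum_lessThan_telescope by (intro tendsto_add tendsto_const)
  then have "lim u = u 0 + s"
    by (intro limI) simp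
  moreover have "norm s \<le> (\<Sum>k. norm (u (Suc k) - u k))"
    unfolding s_def using summable_norms by (rule summable_norm)
  moreover have "(\<Sum>k. norm (u (Suc k) - u k)) \<le> K / (1 - r)"
    unfolding sums_unique[OF geometric]
    using increments summable_norms sums_summable[OF geometric] by (rule suminf_le)
  ultimately show ?thesis by simp
qed

context group
begin

lemma jensen_defect_nat_pow:
  assumes "a \<in> carrier G"
  shows "jensen_defect G f (a [^] (Suc j * n)) (a [^] n)
    = f (a [^] (Suc (Suc j) * n)) + f (a [^] (j * n)) - 2 *\<^sub>R f (a [^] (Suc j * n))"
proof -
  have "a [^] (Suc j * n) \<otimes> a [^] n = a [^] (Suc (Suc j) * n)"
    using assms by (simp add: nat_pow_mult add.commute)
  moreover have "a [^] (Suc j * n) = a [^] (j * n) \<otimes> a [^] n"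
    using assms by (simp add: nat_pow_mult add.commute)
  then have "a [^] (Suc j * n) \<otimes> inv (a [^] n) = a [^] (j * n)"
    using assms by (simp add: m_assoc)
  ultimately show ?thesis
    unfolding jensen_defect_def by simp
qed

lemma norm_nat_pow_mult_sub_le:
  assumes defect: "\<And>x y. x \<in> carrier G \<Longrightarrow> y \<in> carrier G \<Longrightarrow> norm (jensen_defect G f x y) \<le> c"
    and "a \<in> carrier G"
  shows "norm (f (a [^] (m * n)) - real m *\<^sub>R f (a [^] n))
    \<le> c * real m ^ 2 + \<bar>real m - 1\<bar> * norm (f \<one>)"
proof -
  have "norm (f (a [^] (j * n)) - f (a [^] (0 * n)) - real j *\<^sub>R (f (a [^] (1 * n)) - f (a [^] (0 * n))))
      \<le> c * real j ^ 2" for j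
    using defect \<open>a \<in> carrier G\<close>
    by (intro second_difference_bound[where h = "\<lambda>j. f (a [^] (j * n))"])
       (metis jensen_defect_nat_pow nat_pow_closed)
  then have second_diff: "norm (f (a [^] (m * n)) - f \<one> - real m *\<^sub>R (f (a [^] n) - f \<one>))
      \<le> c * real m ^ 2"
    by simp
  have "f (a [^] (m * n)) - real m *\<^sub>R f (a [^] n)
      = (f (a [^] (m * n)) - f \<one> - real m *\<^sub>R (f (a [^] n) - f \<one>)) - (real m - 1) *\<^sub>R f \<one>"
    by (simp add: algebra_simps)
  also have "norm \<dots> \<le> c * real m ^ 2 + \<bar>real m - 1\<bar> * norm (f \<one>)"
    using norm_triangle_ineq4 second_diff by (rule order_trans[OF _ add_mono]) simp
  finally show ?thesis .
qed

lemma norm_phi_lim_sub_le: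
  fixes f :: "'a \<Rightarrow> 'e::banach"
  assumes defect: "\<And>x y. x \<in> carrier G \<Longrightarrow> y \<in> carrier G \<Longrightarrow> norm (jensen_defect G f x y) \<le> c"
    and "a \<in> carrier G" and "m \<ge> 2"
  shows "norm (phi_lim G f m a - f a) \<le> (c * real m ^ 2 + (real m - 1) * norm (f \<one>)) / (real m - 1)"
proof -
  define K where "K = c * real m ^ 2 + (real m - 1) * norm (f \<one>)"
  define u where "u k = (1 / real (m ^ k)) *\<^sub>R f (a [^] (m ^ k))" for k
  have increments: "norm (u (Suc k) - u k) \<le> (K / real m) * (1 / real m) ^ k" for k
  proof -
    have "u (Suc k) - u k
        = (1 / real m ^ Suc k) *\<^sub>R (f (a [^] (m * m ^ k)) - real m *\<^sub>R f (a [^] (m ^ k)))"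
      using \<open>m \<ge> 2\<close> unfolding u_def by (simp add: algebra_simps)
    moreover have "norm (f (a [^] (m * m ^ k)) - real m *\<^sub>R f (a [^] (m ^ k))) \<le> K"
      using norm_nat_pow_mult_sub_le[OF defect \<open>a \<in> carrier G\<close>, of m "m ^ k"] \<open>m \<ge> 2\<close>
      unfolding K_def by simp
    ultimately show ?thesis
      by (simp add: power_divide divide_right_mono)
  qed
  have "norm (lim u - u 0) \<le> (K / real m) / (1 - 1 / real m)"
    using \<open>m \<ge> 2\<close> by (intro norm_lim_sub_le_geometric[OF increments]) auto
  moreover have "(K / real m) / (1 - 1 / real m) = K / (real m - 1)"
    using \<open>m \<ge> 2\<close> by (simp add: field_simps)
  moreover have "lim u = phi_lim G f m a" "u 0 = f a"
    unfolding u_def phi_lim_def using \<open>a \<in> carrier G\<close> by simp_all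
  ultimately show ?thesis
    unfolding K_def[symmetric] by metis
qed

lemma norm_jensen_defect_perturbation_le:
  assumes "norm (jensen_defect G f x y) \<le> c"
    and "\<And>z. z \<in> carrier G \<Longrightarrow> norm (g z - f z) \<le> B"
    and "x \<in> carrier G" "y \<in> carrier G"
  shows "norm (jensen_defect G g x y) \<le> c + 4 * B"
proof -
  define p q where "p = x \<otimes> y" and "q = x \<otimes> inv y"
  have "p \<in> carrier G" "q \<in> carrier G"
    unfolding p_def q_def using assms(3,4) by simp_all
  have "jensen_defect G g x y
      = jensen_defect G f x y + (g p - f p) + (g q - f q) - 2 *\<^sub>R (g x - f x)"
    unfolding jensen_defect_def p_def q_def by (simp add: algebra_simps)
  also have "norm \<dots> \<le> norm (jensen_defect G f x y) + norm (g p - f p) + norm (g q - f q)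
      + 2 * norm (g x - f x)"
    by (intro order_trans[OF norm_triangle_ineq4] add_mono order_trans[OF norm_triangle_ineq]
        add_right_mono norm_triangle_ineq) simp_all
  also have "\<dots> \<le> c + B + B + 2 * B"
    using assms \<open>p \<in> carrier G\<close> \<open>q \<in> carrier G\<close> by (intro add_mono) auto
  finally show ?thesis by simp
qed

end

theorem lemma2p5:
  fixes G :: "('a, 'c) monoid_scheme" and f :: "'a \<Rightarrow> 'b::banach" and c :: real and m :: nat
  assumes "group G"
    and "c > 0"
    and "\<forall>x\<in>carrier G. \<forall>y\<in>carrier G.
           norm (f (x \<otimes>\<^bsub>G\<^esub> y) + f (x \<otimes>\<^bsub>G\<^esub> inv\<^bsub>G\<^esub> y) - 2 *\<^sub>R f x) \<le> c"
    and "m \<ge> 2"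
  shows "phi_lim G f m \<in> KJ G"
proof -
  interpret group G by (rule assms(1))
  define B where "B = (c * real m ^ 2 + (real m - 1) * norm (f \<one>\<^bsub>G\<^esub>)) / (real m - 1)"
  have defect: "norm (jensen_defect G f x y) \<le> c" if "x \<in> carrier G" "y \<in> carrier G" for x y
    using assms(3) that unfolding jensen_defect_def by blast
  have "norm (phi_lim G f m z - f z) \<le> B" if "z \<in> carrier G" for z
    unfolding B_def using defect that assms(4) by (rule norm_phi_lim_sub_le)
  then have "norm (jensen_defect G (phi_lim G f m) x y) \<le> c + 4 * B"
    if "x \<in> carrier G" "y \<in> carrier G" for x y
    using defect that by (intro norm_jensen_defect_perturbation_le) auto
  moreover have "c + 4 * B > 0"
    unfolding B_def using assms(2,4) by (simp add: add_pos_nonneg)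
  ultimately show ?thesis
    unfolding KJ_iff_bounded_jensen_defect by blast
qed

end
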